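(* Let $F$ be a PLSEM-function whose Jacobian $\mathrm{D}F$ is lower triangular. Fix $l\in\{1,\dots,p\}$ and a constant orthogonal projection matrix $A\in\mathbb{R}^{p\times p}$. Let $S\subseteq\{1,\dots,p\}\setminus\{l\}$ and let $u,u_s:\mathbb{R}\to\mathbb{R}$ ($s\in S$) be twice continuously differentiable, with each $u_s'\not\equiv0$. If $$u\Big(x_l+\sum_{s\in S}u_s(x_s)\Big)=F(x)^t(\mathrm{Id}-A)\,\partial_lF(x)\quad\text{for all }x\in\mathbb{R}^p,$$ then $(\mathrm{Id}-A)\,\partial_l^2F\equiv0$.
   Context: A PLSEM with DAG $D$ on $\{1,\dots,p\}$ is a system $X_j=\mu_j+\sum_{i\in\mathrm{pa}_D(j)} f_{j,i}(X_i)+\varepsilon_j$, $j=1,\dots,p$, where $\mu_j\in\mathbb{R}$, $f_{j,i}\in C^2(\mathbb{R})$, $f_{j,i}\not\equiv 0$, $\mathbb{E}[f_{j,i}(X_i)]=0$, and $\varepsilon_1,\dots,\varepsilon_p$ are mutually independent with $\varepsilon_j\sim\mathcal{N}(0,\sigma_j^2)$, $\sigma_j^2>0$. Its PLSEM-function is $F(x)_j=\frac{1}{\sigma_j}\big(x_j-\mu_j-\sum_{i\in\mathrm{pa}_D(j)}f_{j,i}(x_i)\big)$. $\partial_lF$ and $\partial_l^2F$ denote the vectors of first and second partial derivatives of the components of $F$ in $x_l$. *)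

theory Defs
  imports "HOL-Probability.Probability"
begin

text \<open>Indices are 1..p; vectors in R^p are functions nat => real (only the
components 1..p are relevant); p x p matrices are functions nat => nat => real.\<close>

definition C2 :: "(real \<Rightarrow> real) \<Rightarrow> bool" where
  "C2 g \<longleftrightarrow> (\<exists>g' g''. (\<forall>t. (g has_real_derivative g' t) (at t))
                    \<and> (\<forall>t. (g' has_real_derivative g'' t) (at t))
                    \<and> continuous_on UNIV g'')"

definition pa :: "nat rel \<Rightarrow> nat \<Rightarrow> nat set" where
  "pa D j = {i. (i, j) \<in> D}"

definition is_DAG :: "nat \<Rightarrow> nat rel \<Rightarrow> bool" where
  "is_DAG p D \<longleftrightarrow> D \<subseteq> {1..p} \<times> {1..p} \<and> acyclic D"

definition noise_measure :: "nat \<Rightarrow> (nat \<Rightarrow> real) \<Rightarrow> (nat \<Rightarrow> real) measure" where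
  "noise_measure p sd = PiM {1..p} (\<lambda>j. density lborel (normal_density 0 (sd j)))"

text \<open>The (unique, by acyclicity) solution X of the structural equations for noise e.\<close>
definition PLSEM_solution ::
  "nat \<Rightarrow> nat rel \<Rightarrow> (nat \<Rightarrow> real) \<Rightarrow> (nat \<Rightarrow> nat \<Rightarrow> real \<Rightarrow> real) \<Rightarrow> (nat \<Rightarrow> real) \<Rightarrow> (nat \<Rightarrow> real)" where
  "PLSEM_solution p D mu f e =
     (THE x. (\<forall>j\<in>{1..p}. x j = mu j + (\<Sum>i\<in>pa D j. f j i (x i)) + e j)
           \<and> (\<forall>j. j \<notin> {1..p} \<longrightarrow> x j = 0))"

definition is_PLSEM ::
  "nat \<Rightarrow> nat rel \<Rightarrow> (nat \<Rightarrow> real) \<Rightarrow> (nat \<Rightarrow> nat \<Rightarrow> real \<Rightarrow> real) \<Rightarrow> (nat \<Rightarrow> real) \<Rightarrow> bool" where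
  "is_PLSEM p D mu f sd \<longleftrightarrow>
     is_DAG p D
     \<and> (\<forall>j\<in>{1..p}. sd j > 0)
     \<and> (\<forall>(i, j)\<in>D. C2 (f j i) \<and> (\<exists>t. f j i t \<noteq> 0))
     \<and> (\<forall>(i, j)\<in>D.
          integrable (noise_measure p sd) (\<lambda>e. f j i (PLSEM_solution p D mu f e i))
        \<and> (\<integral>e. f j i (PLSEM_solution p D mu f e i) \<partial>noise_measure p sd) = 0)"

definition PLSEM_fun ::
  "nat rel \<Rightarrow> (nat \<Rightarrow> real) \<Rightarrow> (nat \<Rightarrow> nat \<Rightarrow> real \<Rightarrow> real) \<Rightarrow> (nat \<Rightarrow> real) \<Rightarrow> (nat \<Rightarrow> real) \<Rightarrow> nat \<Rightarrow> real" where
  "PLSEM_fun D mu f sd x j = (x j - mu j - (\<Sum>i\<in>pa D j. f j i (x i))) / sd j"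

definition partial :: "nat \<Rightarrow> ((nat \<Rightarrow> real) \<Rightarrow> real) \<Rightarrow> (nat \<Rightarrow> real) \<Rightarrow> real" where
  "partial l g x = deriv (\<lambda>t. g (x(l := t))) (x l)"

definition jacobian_lower_triangular :: "nat \<Rightarrow> ((nat \<Rightarrow> real) \<Rightarrow> nat \<Rightarrow> real) \<Rightarrow> bool" where
  "jacobian_lower_triangular p F \<longleftrightarrow>
     (\<forall>x. \<forall>j\<in>{1..p}. \<forall>i\<in>{1..p}. j < i \<longrightarrow> partial i (\<lambda>y. F y j) x = 0)"

definition orth_projection :: "nat \<Rightarrow> (nat \<Rightarrow> nat \<Rightarrow> real) \<Rightarrow> bool" where
  "orth_projection p A \<longleftrightarrow>
     (\<forall>i\<in>{1..p}. \<forall>j\<in>{1..p}. A i j = A j i)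
     \<and> (\<forall>i\<in>{1..p}. \<forall>j\<in>{1..p}. (\<Sum>k\<in>{1..p}. A i k * A k j) = A i j)"

definition id_minus_mult :: "nat \<Rightarrow> (nat \<Rightarrow> nat \<Rightarrow> real) \<Rightarrow> (nat \<Rightarrow> real) \<Rightarrow> nat \<Rightarrow> real" where
  "id_minus_mult p A v i = v i - (\<Sum>k\<in>{1..p}. A i k * v k)"

end

theory Submission
  imports Defs
begin

(*
  Since F_j(x) = (x_j - mu_j - sum_i f_ji(x_i)) / sigma_j, the derivative d_l F depends on x_l
  only, so the hypothesis reads u(x_l + sum_S u_s(x_s)) = sum_i F_i(x) r_i(x_l) with
  r = (Id - A) d_l F. Changing a single coordinate x_k, k /= l, moves only the components F_i
  with i >= k (lower triangularity), and moves the left-hand side only if k is in S.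
  If S contains some k > l, then u'' = 0: with a second index s' in S the increments of u along
  u_k and along u_s' commute, and if S = {k} the increment of u along u_k is linear in x_k,
  which forces the Riccati equation (u_k')' = -c (u_k')^2 with no global solution.
  Differentiating in x_l and solving the triangular system from p downwards then gives
  r_m' = 0 for m > l, whereas (d_l^2 F)_j = 0 for j <= l. Thus w = (Id - A) d_l^2 F and
  v = d_l^2 F have disjoint supports, and |w|^2 = <w, v> - <Aw, v> = 0 because A is a
  symmetric idempotent.
*)

lemma C2_has_derivatives:
  assumes "C2 g"
  shows "(g has_real_derivative deriv g t) (at t)"
    and "(deriv g has_real_derivative deriv (deriv g) t) (at t)"
proof -
  obtain g' g'' where g': "\<And>t. (g has_real_derivative g' t) (at t)"
    and g'': "\<And>t. (g' has_real_derivative g'' t) (at t)"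
    using assms unfolding C2_def by blast
  have "deriv g = g'" "deriv g' = g''"
    using g' g'' by (auto intro!: ext DERIV_imp_deriv)
  with g' g'' show "(g has_real_derivative deriv g t) (at t)"
    and "(deriv g has_real_derivative deriv (deriv g) t) (at t)" by simp_all
qed

lemma DERIV_zero_if_shift_invariant:
  fixes g g' \<alpha> \<alpha>' :: "real \<Rightarrow> real"
  assumes g: "\<And>z. (g has_real_derivative g' z) (at z)"
    and \<alpha>: "\<And>y. (\<alpha> has_real_derivative \<alpha>' y) (at y)" and "\<alpha>' y1 \<noteq> 0"
    and invariant: "\<And>T y. g (T + \<alpha> y) = g (T + \<alpha> 0)"
  shows "g' z = 0"
proof -
  let ?T = "z - \<alpha> y1"
  have "((\<lambda>y. g (?T + \<alpha> y)) has_real_derivative g' (?T + \<alpha> y1) * \<alpha>' y1) (at y1)"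
    by (rule DERIV_chain2[OF g]) (auto intro!: derivative_eq_intros \<alpha>)
  moreover have "(\<lambda>y. g (?T + \<alpha> y)) = (\<lambda>y. g (?T + \<alpha> 0))"
    by (rule ext) (rule invariant)
  then have "((\<lambda>y. g (?T + \<alpha> y)) has_real_derivative 0) (at y1)"
    by simp
  ultimately show ?thesis
    using DERIV_unique \<open>\<alpha>' y1 \<noteq> 0\<close> by fastforce
qed

lemma riccati_no_global_solution:
  fixes U H H' :: "real \<Rightarrow> real"
  assumes U: "\<And>y. (U has_real_derivative H y) (at y)"
    and H: "\<And>y. (H has_real_derivative H' y) (at y)"
    and riccati: "\<And>y. H' y = - \<kappa> * (H y)\<^sup>2"
    and "H y0 \<noteq> 0" and "\<kappa> \<noteq> 0"
  shows False
proof -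
  \<comment> \<open>\<open>1 / L\<close> is the explicit solution through \<open>(y0, H y0)\<close>; \<open>H * L - 1\<close> solves a linear
     equation with integrating factor \<open>exp (\<kappa> * U)\<close>, so \<open>E\<close> is constant, yet it vanishes at \<open>y0\<close>
     and not at the pole of \<open>1 / L\<close>.\<close>
  define L where "L y = 1 / H y0 + \<kappa> * (y - y0)" for y
  define E where "E y = (H y * L y - 1) * exp (\<kappa> * U y)" for y
  have "(E has_real_derivative 0) (at y)" for y
  proof -
    have "(E has_real_derivative
      (H' y * L y + H y * \<kappa>) * exp (\<kappa> * U y) + (H y * L y - 1) * (exp (\<kappa> * U y) * (\<kappa> * H y))) (at y)"
      unfolding E_def L_def by (auto intro!: derivative_eq_intros U H)
    moreover have "(H' y * L y + H y * \<kappa>) * exp (\<kappa> * U y)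
        + (H y * L y - 1) * (exp (\<kappa> * U y) * (\<kappa> * H y)) = 0"
      unfolding riccati by (simp add: algebra_simps power2_eq_square)
    ultimately show ?thesis by simp
  qed
  then have "E (y0 - 1 / (\<kappa> * H y0)) = E y0"
    using DERIV_isconst_all by blast
  moreover have "E y0 = 0"
    unfolding E_def L_def using \<open>H y0 \<noteq> 0\<close> by simp
  moreover have "L (y0 - 1 / (\<kappa> * H y0)) = 0"
    unfolding L_def using \<open>H y0 \<noteq> 0\<close> \<open>\<kappa> \<noteq> 0\<close> by (simp add: field_simps)
  ultimately show False
    unfolding E_def by simp
qed

lemma deriv2_zero_if_increments_commute:
  fixes u V W :: "real \<Rightarrow> real"
  assumes u: "C2 u"
    and V: "\<And>y. (V has_real_derivative V' y) (at y)" "V' a0 \<noteq> 0"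
    and W: "\<And>y. (W has_real_derivative W' y) (at y)" "W' b0 \<noteq> 0"
    and commute: "\<And>T a b. u (T + W b + V a) - u (T + W b + V 0)
                          = u (T + W 0 + V a) - u (T + W 0 + V 0)"
  shows "deriv (deriv u) z = 0"
proof -
  have u_shift: "((\<lambda>w. u (w + c)) has_real_derivative deriv u (w + c)) (at w)" for c w
    using C2_has_derivatives(1)[OF u] DERIV_shift by blast
  have "deriv u (w + V a) - deriv u (w + V 0) = 0" for w a
    by (rule DERIV_zero_if_shift_invariant[where g = "\<lambda>w. u (w + V a) - u (w + V 0)", OF _ W])
       (intro DERIV_diff u_shift, rule commute)
  then have "deriv u (T + V a) = deriv u (T + V 0)" for T a
    by simp
  then show ?thesis
    by (rule DERIV_zero_if_shift_invariant[OF C2_has_derivatives(2)[OF u] V])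
qed

lemma increment_linear_riccati:
  fixes u G G' U H H' h :: "real \<Rightarrow> real"
  assumes u: "\<And>t. (u has_real_derivative G t) (at t)" "\<And>t. (G has_real_derivative G' t) (at t)"
    and U: "\<And>y. (U has_real_derivative H y) (at y)" "\<And>y. (H has_real_derivative H' y) (at y)"
    and linear: "\<And>t y. u (t + U y) - u (t + U 0) = y * h t"
  shows "G z * H' y = - G' z * (H y)\<^sup>2"
proof -
  have G_H: "G (t + U y) * H y = h t" for t y
  proof -
    have "((\<lambda>y. u (t + U y) - u (t + U 0)) has_real_derivative G (t + U y) * H y) (at y)"
      by (auto intro!: derivative_eq_intros DERIV_chain2[OF u(1)] U)
    moreover have "((\<lambda>y. u (t + U y) - u (t + U 0)) has_real_derivative h t) (at y)"
      unfolding linear by (auto intro!: derivative_eq_intros)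
    ultimately show ?thesis by (rule DERIV_unique)
  qed
  have h: "(h has_real_derivative G' (t + U y) * H y) (at t)" for t y
  proof -
    have "((\<lambda>t. G (t + U y) * H y) has_real_derivative G' (t + U y) * H y) (at t)"
      using u(2) DERIV_shift DERIV_cmult_right by blast
    then show ?thesis unfolding G_H .
  qed
  have "((\<lambda>y. z - U y) has_real_derivative - H y) (at y)"
    by (auto intro!: derivative_eq_intros U)
  from DERIV_chain2[OF h[of _ y] this]
  have "((\<lambda>y. h (z - U y)) has_real_derivative G' z * H y * - H y) (at y)"
    by simp
  moreover have "h (z - U y') = G z * H y'" for y'
    using G_H[of "z - U y'" y'] by simp
  then have "((\<lambda>y. h (z - U y)) has_real_derivative G z * H' y) (at y)"
    by (simp add: DERIV_cmult U)
  ultimately have "G' z * H y * - H y = G z * H' y"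
    by (rule DERIV_unique)
  then show ?thesis
    by (simp add: power2_eq_square)
qed

lemma deriv2_zero_if_increment_linear:
  fixes u U h :: "real \<Rightarrow> real"
  assumes u: "C2 u" and U: "C2 U" and "deriv U y0 \<noteq> 0"
    and linear: "\<And>t y. u (t + U y) - u (t + U 0) = y * h t"
  shows "deriv (deriv u) z = 0"
proof (rule ccontr)
  let ?G = "deriv u" and ?H = "deriv U"
  assume G'_nonzero: "deriv ?G z \<noteq> 0"
  have riccati: "?G z * deriv ?H y = - deriv ?G z * (?H y)\<^sup>2" for y
    using increment_linear_riccati[OF C2_has_derivatives[OF u] C2_has_derivatives[OF U] linear] .
  have "?G z \<noteq> 0"
    using riccati[of y0] G'_nonzero \<open>?H y0 \<noteq> 0\<close> by auto
  then have "deriv ?H y = - (deriv ?G z / ?G z) * (?H y)\<^sup>2" for y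
    using riccati[of y] by (simp add: field_simps)
  moreover have "deriv ?G z / ?G z \<noteq> 0"
    using G'_nonzero \<open>?G z \<noteq> 0\<close> by simp
  ultimately show False
    by (rule riccati_no_global_solution[where H' = "deriv ?H",
          OF C2_has_derivatives[OF U] _ \<open>?H y0 \<noteq> 0\<close>])
qed

lemma sum_triangular:
  fixes c z :: "nat \<Rightarrow> real"
  assumes "k \<in> {1..p}"
    and "\<And>i. i \<in> {1..<k} \<Longrightarrow> c i = 0" and "\<And>i. i \<in> {k<..p} \<Longrightarrow> z i = 0"
  shows "(\<Sum>i\<in>{1..p}. c i * z i) = c k * z k"
proof -
  have "(\<Sum>i\<in>{1..p}. c i * z i) = (\<Sum>i\<in>{1..p}. if i = k then c k * z k else 0)"
  proof (rule sum.cong[OF refl])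
    fix i assume "i \<in> {1..p}"
    then consider "i \<in> {1..<k}" | "i = k" | "i \<in> {k<..p}" by fastforce
    then show "c i * z i = (if i = k then c k * z k else 0)"
      by cases (use assms in auto)
  qed
  also have "\<dots> = c k * z k"
    using assms(1) by simp
  finally show ?thesis .
qed

lemma triangular_system_zero:
  fixes c :: "nat \<Rightarrow> nat \<Rightarrow> real" and z :: "nat \<Rightarrow> real"
  assumes "1 \<le> a"
    and lower: "\<And>m i. m \<in> {a..p} \<Longrightarrow> i \<in> {1..<m} \<Longrightarrow> c m i = 0"
    and diag: "\<And>m. m \<in> {a..p} \<Longrightarrow> c m m \<noteq> 0"
    and solution: "\<And>m. m \<in> {a..p} \<Longrightarrow> (\<Sum>i\<in>{1..p}. c m i * z i) = 0"
  shows "m \<in> {a..p} \<Longrightarrow> z m = 0"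
proof (induction "p - m" arbitrary: m rule: less_induct)
  case less
  have "(\<Sum>i\<in>{1..p}. c m i * z i) = c m m * z m"
    using less \<open>1 \<le> a\<close> by (intro sum_triangular lower) auto
  then show ?case
    using solution[OF less.prems] diag[OF less.prems] by simp
qed

lemma orth_projection_mult_id_minus_mult:
  assumes "orth_projection p A" and "k \<in> {1..p}"
  shows "(\<Sum>j\<in>{1..p}. A k j * id_minus_mult p A v j) = 0"
proof -
  have "(\<Sum>j\<in>{1..p}. A k j * id_minus_mult p A v j)
      = (\<Sum>j\<in>{1..p}. A k j * v j) - (\<Sum>j\<in>{1..p}. \<Sum>m\<in>{1..p}. A k j * A j m * v m)"
    unfolding id_minus_mult_def
    by (simp add: right_diff_distrib sum_subtractf sum_distrib_left mult.assoc)
  also have "(\<Sum>j\<in>{1..p}. \<Sum>m\<in>{1..p}. A k j * A j m * v m)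
      = (\<Sum>m\<in>{1..p}. (\<Sum>j\<in>{1..p}. A k j * A j m) * v m)"
    by (subst sum.swap) (simp add: sum_distrib_right)
  also have "\<dots> = (\<Sum>m\<in>{1..p}. A k m * v m)"
    using assms unfolding orth_projection_def by (intro sum.cong refl) (simp only:)
  finally show ?thesis by simp
qed

lemma id_minus_mult_zero_if_disjoint_support:
  assumes A: "orth_projection p A"
    and disjoint: "\<And>j. j \<in> {1..p} \<Longrightarrow> id_minus_mult p A v j * v j = 0"
    and "i \<in> {1..p}"
  shows "id_minus_mult p A v i = 0"
proof -
  let ?w = "id_minus_mult p A v"
  have "(\<Sum>j\<in>{1..p}. ?w j * (\<Sum>k\<in>{1..p}. A j k * v k))
      = (\<Sum>j\<in>{1..p}. \<Sum>k\<in>{1..p}. v k * (A k j * ?w j))"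
    using A unfolding orth_projection_def by (auto simp: sum_distrib_left intro!: sum.cong)
  also have "\<dots> = (\<Sum>k\<in>{1..p}. v k * (\<Sum>j\<in>{1..p}. A k j * ?w j))"
    by (subst sum.swap) (simp add: sum_distrib_left)
  also have "\<dots> = 0"
    using orth_projection_mult_id_minus_mult[OF A] by simp
  finally have "(\<Sum>j\<in>{1..p}. ?w j * ?w j) = (\<Sum>j\<in>{1..p}. ?w j * v j)"
    unfolding id_minus_mult_def[of p A v] by (simp add: right_diff_distrib sum_subtractf)
  also have "\<dots> = 0"
    using disjoint by (intro sum.neutral) blast
  finally have "\<forall>j\<in>{1..p}. ?w j * ?w j = 0"
    by (subst (asm) sum_nonneg_eq_0_iff) auto
  then show ?thesis
    using \<open>i \<in> {1..p}\<close> by simp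
qed

locale triangular_PLSEM_fun =
  fixes p :: nat and D :: "nat rel" and mu sd :: "nat \<Rightarrow> real"
    and f :: "nat \<Rightarrow> nat \<Rightarrow> real \<Rightarrow> real"
  assumes DAG: "is_DAG p D"
    and sd_pos: "\<And>j. j \<in> {1..p} \<Longrightarrow> sd j > 0"
    and f_C2: "\<And>i j. (i, j) \<in> D \<Longrightarrow> C2 (f j i)"
    and lower_triangular: "jacobian_lower_triangular p (PLSEM_fun D mu f sd)"
begin

abbreviation F :: "(nat \<Rightarrow> real) \<Rightarrow> nat \<Rightarrow> real" where
  "F \<equiv> PLSEM_fun D mu f sd"

(* Each F j is a sum of univariate functions, so its partial derivatives and increments in the
   coordinate x m depend on x m alone. *)
definition dF :: "nat \<Rightarrow> nat \<Rightarrow> real \<Rightarrow> real" where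
  "dF m j t = ((if j = m then 1 else 0) - (if m \<in> pa D j then deriv (f j m) t else 0)) / sd j"

definition d2F :: "nat \<Rightarrow> nat \<Rightarrow> real \<Rightarrow> real" where
  "d2F m j t = - (if m \<in> pa D j then deriv (deriv (f j m)) t else 0) / sd j"

definition F_incr :: "nat \<Rightarrow> real \<Rightarrow> nat \<Rightarrow> real" where
  "F_incr k y j = ((if j = k then y else 0) - (if k \<in> pa D j then f j k y - f j k 0 else 0)) / sd j"

lemma finite_pa: "finite (pa D j)"
proof (rule finite_subset)
  show "pa D j \<subseteq> {1..p}"
    using DAG unfolding is_DAG_def pa_def by auto
qed simp

lemma parent_C2: "i \<in> pa D j \<Longrightarrow> C2 (f j i)"
  using f_C2 unfolding pa_def by simp

lemma not_parent_self: "j \<notin> pa D j"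
  using DAG unfolding is_DAG_def pa_def acyclic_irrefl irrefl_def by auto

lemma DERIV_F_upd: "((\<lambda>t. F (x(m := t)) j) has_real_derivative dF m j t) (at t)"
proof -
  have "((\<lambda>t. \<Sum>i\<in>pa D j. f j i ((x(m := t)) i)) has_real_derivative
          (\<Sum>i\<in>pa D j. if i = m then deriv (f j i) t else 0)) (at t)"
  proof (rule DERIV_sum)
    fix i assume "i \<in> pa D j"
    then show "((\<lambda>t. f j i ((x(m := t)) i)) has_real_derivative (if i = m then deriv (f j i) t else 0)) (at t)"
      using C2_has_derivatives(1)[OF parent_C2] by (cases "i = m") auto
  qed
  moreover have "((\<lambda>t. (x(m := t)) j) has_real_derivative (if j = m then 1 else 0)) (at t)"
    by (cases "j = m") auto
  ultimately have "((\<lambda>t. ((x(m := t)) j - mu j - (\<Sum>i\<in>pa D j. f j i ((x(m := t)) i))) / sd j)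
      has_real_derivative
        ((if j = m then 1 else 0) - 0 - (\<Sum>i\<in>pa D j. if i = m then deriv (f j i) t else 0)) / sd j)
      (at t)"
    by (intro DERIV_cdivide DERIV_diff DERIV_const)
  then show ?thesis
    unfolding PLSEM_fun_def dF_def using finite_pa by (simp add: sum.delta)
qed

lemma partial_F: "partial m (\<lambda>y. F y j) x = dF m j (x m)"
  unfolding partial_def using DERIV_F_upd by (simp add: DERIV_imp_deriv)

lemma DERIV_dF: "(dF m j has_real_derivative d2F m j t) (at t)"
proof (cases "m \<in> pa D j")
  case True
  then have "((\<lambda>t. ((if j = m then 1 else 0) - deriv (f j m) t) / sd j)
      has_real_derivative (0 - deriv (deriv (f j m)) t) / sd j) (at t)"
    by (intro DERIV_cdivide DERIV_diff DERIV_const C2_has_derivatives(2) parent_C2)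
  with True show ?thesis
    unfolding dF_def d2F_def by simp
qed (simp add: dF_def[abs_def] d2F_def)

lemma partial2_F: "partial m (\<lambda>y. partial m (\<lambda>z. F z j) y) x = d2F m j (x m)"
  unfolding partial_F unfolding partial_def using DERIV_dF by (simp add: DERIV_imp_deriv)

lemma dF_below_diag:
  assumes "j \<in> {1..p}" "m \<in> {1..p}" "j < m"
  shows "dF m j t = 0"
  using lower_triangular assms partial_F[of m j "\<lambda>_. t"]
  unfolding jacobian_lower_triangular_def by simp

lemma d2F_upto_diag:
  assumes "j \<in> {1..p}" "m \<in> {1..p}" "j \<le> m"
  shows "d2F m j t = 0"
proof (cases "j = m")
  case False
  with assms have "dF m j = (\<lambda>_. 0)"
    using dF_below_diag by fastforce
  then have "(dF m j has_real_derivative 0) (at t)"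
    by simp
  then show ?thesis
    using DERIV_dF DERIV_unique by blast
qed (simp add: d2F_def not_parent_self)

lemma F_upd_diff: "F (x(k := y)) j - F (x(k := 0)) j = F_incr k y j"
proof -
  have "(\<Sum>i\<in>pa D j. f j i ((x(k := y)) i)) - (\<Sum>i\<in>pa D j. f j i ((x(k := 0)) i))
      = (\<Sum>i\<in>pa D j. if i = k then f j k y - f j k 0 else 0)"
    by (subst sum_subtractf[symmetric]) (auto intro!: sum.cong)
  also have "\<dots> = (if k \<in> pa D j then f j k y - f j k 0 else 0)"
    using finite_pa by (simp add: sum.delta)
  finally show ?thesis
    unfolding PLSEM_fun_def F_incr_def by (simp add: diff_divide_distrib[symmetric] algebra_simps)
qed

lemma F_incr_below_diag:
  assumes "j \<in> {1..p}" "k \<in> {1..p}" "j < k"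
  shows "F_incr k y j = 0"
proof -
  have "F ((\<lambda>_. 0)(k := y)) j = F ((\<lambda>_. 0)(k := 0)) j"
    using DERIV_isconst_all DERIV_F_upd dF_below_diag[OF assms] by metis
  then show ?thesis
    using F_upd_diff[of "\<lambda>_. 0" k y j] by simp
qed

lemma F_incr_diag: "F_incr k y k = y / sd k"
  unfolding F_incr_def using not_parent_self by simp

lemma F_incr_triangular_zero:
  assumes "1 \<le> a" and "\<And>m. m \<in> {a..p} \<Longrightarrow> (\<Sum>i\<in>{1..p}. F_incr m 1 i * z i) = 0"
    and "m \<in> {a..p}"
  shows "z m = 0"
proof (rule triangular_system_zero[of a p "\<lambda>m i. F_incr m 1 i", OF assms(1) _ _ assms(2,3)])
  fix m i assume "m \<in> {a..p}" "i \<in> {1..<m}"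
  then show "F_incr m 1 i = 0"
    using \<open>1 \<le> a\<close> by (intro F_incr_below_diag) auto
next
  fix m assume "m \<in> {a..p}"
  then show "F_incr m 1 m \<noteq> 0"
    using \<open>1 \<le> a\<close> sd_pos[of m] by (simp add: F_incr_diag)
qed

end

locale PLSEM_identity = triangular_PLSEM_fun +
  fixes l :: nat and A :: "nat \<Rightarrow> nat \<Rightarrow> real" and S :: "nat set"
    and u :: "real \<Rightarrow> real" and us :: "nat \<Rightarrow> real \<Rightarrow> real"
  assumes l: "l \<in> {1..p}"
    and A: "orth_projection p A"
    and S: "S \<subseteq> {1..p} - {l}"
    and u: "C2 u"
    and us_C2: "\<And>s. s \<in> S \<Longrightarrow> C2 (us s)"
    and us_nonconst: "\<And>s. s \<in> S \<Longrightarrow> \<exists>t. deriv (us s) t \<noteq> 0"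
    and identity: "\<And>x. u (x l + (\<Sum>s\<in>S. us s (x s))) =
      (\<Sum>i\<in>{1..p}. PLSEM_fun D mu f sd x i *
         id_minus_mult p A (\<lambda>j. partial l (\<lambda>y. PLSEM_fun D mu f sd y j) x) i)"
begin

definition compl_dF :: "nat \<Rightarrow> real \<Rightarrow> real" where
  "compl_dF i t = id_minus_mult p A (\<lambda>j. dF l j t) i"

definition compl_d2F :: "nat \<Rightarrow> real \<Rightarrow> real" where
  "compl_d2F i t = id_minus_mult p A (\<lambda>j. d2F l j t) i"

definition u_arg :: "(nat \<Rightarrow> real) \<Rightarrow> real" where
  "u_arg x = x l + (\<Sum>s\<in>S. us s (x s))"

lemma DERIV_compl_dF: "(compl_dF i has_real_derivative compl_d2F i t) (at t)"
  unfolding compl_dF_def[abs_def] compl_d2F_def id_minus_mult_def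
  by (intro DERIV_diff DERIV_sum DERIV_cmult DERIV_dF)

lemma finite_S: "finite S"
  using S finite_subset by auto

lemma u_arg_upd_diff:
  assumes "k \<noteq> l"
  shows "u_arg (x(k := y)) - u_arg (x(k := y')) = (if k \<in> S then us k y - us k y' else 0)"
proof -
  have "(\<Sum>s\<in>S. us s ((x(k := z)) s))
      = (\<Sum>s\<in>S - {k}. us s (x s)) + (if k \<in> S then us k z else 0)" for z
  proof (cases "k \<in> S")
    case True
    then show ?thesis
      using finite_S by (simp add: sum.remove[of S k] add.commute)
  next
    case False
    then have "S - {k} = S"
      by blast
    with False show ?thesis
      by (auto intro!: sum.cong)
  qed
  with assms show ?thesis
    by (simp add: u_arg_def)
qed

lemma u_arg_base: "u_arg ((\<lambda>_. 0)(l := t)) = t + (\<Sum>s\<in>S. us s 0)"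
proof -
  have "(\<Sum>s\<in>S. us s (((\<lambda>_. 0)(l := t)) s)) = (\<Sum>s\<in>S. us s 0)"
    using S by (intro sum.cong) auto
  then show ?thesis
    by (simp add: u_arg_def)
qed

lemma u_increment:
  assumes "k \<noteq> l"
  shows "u (u_arg (x(k := 0)) + (if k \<in> S then us k y - us k 0 else 0)) - u (u_arg (x(k := 0)))
       = (\<Sum>i\<in>{1..p}. F_incr k y i * compl_dF i (x l))"
proof -
  have identity_compl_dF: "u (u_arg x) = (\<Sum>i\<in>{1..p}. F x i * compl_dF i (x l))" for x
    using identity unfolding u_arg_def compl_dF_def id_minus_mult_def partial_F by simp
  have "u_arg (x(k := 0)) + (if k \<in> S then us k y - us k 0 else 0) = u_arg (x(k := y))"
    using u_arg_upd_diff[OF assms, of x y 0] by simp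
  moreover have "(\<Sum>i\<in>{1..p}. F (x(k := y)) i * compl_dF i (x l))
      - (\<Sum>i\<in>{1..p}. F (x(k := 0)) i * compl_dF i (x l))
      = (\<Sum>i\<in>{1..p}. F_incr k y i * compl_dF i (x l))"
    unfolding F_upd_diff[of x k y, symmetric] by (simp add: sum_subtractf left_diff_distrib)
  ultimately show ?thesis
    using assms identity_compl_dF[of "x(k := y)"] identity_compl_dF[of "x(k := 0)"] by simp
qed

lemma sum_F_incr_compl_dF_zero:
  assumes "k \<noteq> l" "k \<notin> S"
  shows "(\<Sum>i\<in>{1..p}. F_incr k y i * compl_dF i t) = 0"
  using u_increment[OF assms(1), of "(\<lambda>_. 0)(l := t)" y] assms by simp

lemma sum_F_incr_compl_d2F_zero:
  assumes "k \<noteq> l" and "k \<notin> S \<or> (\<forall>z. deriv (deriv u) z = 0)"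
  shows "(\<Sum>i\<in>{1..p}. F_incr k y i * compl_d2F i t) = 0"
proof -
  define c where "c = (\<Sum>s\<in>S. us s 0)"
  define d where "d = (if k \<in> S then us k y - us k 0 else 0)"
  have "u (t + (c + d)) - u (t + c) = (\<Sum>i\<in>{1..p}. F_incr k y i * compl_dF i t)" for t
    using u_increment[OF assms(1), of "(\<lambda>_. 0)(l := t)" y] assms(1) u_arg_base
    unfolding c_def d_def by (simp add: fun_upd_idem add.assoc)
  moreover have "((\<lambda>t. u (t + (c + d)) - u (t + c)) has_real_derivative
      deriv u (t + (c + d)) - deriv u (t + c)) (at t)"
    using C2_has_derivatives(1)[OF u] by (intro DERIV_diff iffD1[OF DERIV_shift])
  moreover have "deriv u (t + (c + d)) = deriv u (t + c)"
  proof (cases "k \<in> S")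
    case True
    with assms(2) have "\<forall>z. (deriv u has_real_derivative 0) (at z)"
      using C2_has_derivatives(2)[OF u] by metis
    then show ?thesis
      by (rule DERIV_isconst_all)
  qed (simp add: d_def)
  ultimately have "((\<lambda>t. \<Sum>i\<in>{1..p}. F_incr k y i * compl_dF i t) has_real_derivative 0) (at t)"
    by simp
  moreover have "((\<lambda>t. \<Sum>i\<in>{1..p}. F_incr k y i * compl_dF i t) has_real_derivative
      (\<Sum>i\<in>{1..p}. F_incr k y i * compl_d2F i t)) (at t)"
    by (intro DERIV_sum DERIV_cmult DERIV_compl_dF)
  ultimately show ?thesis
    using DERIV_unique by blast
qed

lemma deriv2_u_zero_if_two_in_S:
  assumes "s \<in> S" "s' \<in> S" "s \<noteq> s'"
  shows "deriv (deriv u) z = 0"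
proof -
  define c where "c = (\<Sum>s\<in>S. us s 0)"
  have "s \<noteq> l" "s' \<noteq> l"
    using S assms by auto
  have mixed: "u (T + us s' b + us s a) - u (T + us s' b + us s 0)
      = (\<Sum>i\<in>{1..p}. F_incr s a i * compl_dF i (T - c + us s 0 + us s' 0))" for T a b
  proof -
    let ?t = "T - c + us s 0 + us s' 0"
    let ?x = "((\<lambda>_. 0)(l := ?t))(s' := b)"
    have "u_arg ?x = ?t + c + (us s' b - us s' 0)"
      using u_arg_upd_diff[OF \<open>s' \<noteq> l\<close>, of "(\<lambda>_. 0)(l := ?t)" b 0]
        \<open>s' \<in> S\<close> \<open>s' \<noteq> l\<close> u_arg_base
      unfolding c_def by (simp add: fun_upd_idem)
    moreover have "?x(s := 0) = ?x"
      using assms \<open>s \<noteq> l\<close> by (simp add: fun_upd_idem)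
    ultimately show ?thesis
      using u_increment[OF \<open>s \<noteq> l\<close>, of ?x a] \<open>s \<in> S\<close> \<open>s \<noteq> l\<close> \<open>s' \<noteq> l\<close>
      by (simp add: algebra_simps)
  qed
  obtain a0 b0 where "deriv (us s) a0 \<noteq> 0" "deriv (us s') b0 \<noteq> 0"
    using us_nonconst assms by blast
  then show ?thesis
    using C2_has_derivatives(1)[OF us_C2] assms
    by (intro deriv2_zero_if_increments_commute[OF u,
          where V = "us s" and V' = "deriv (us s)" and W = "us s'" and W' = "deriv (us s')"])
       (simp_all add: mixed)
qed

lemma deriv2_u_zero_if_S_singleton:
  assumes S_eq: "S = {k}" and "l < k"
  shows "deriv (deriv u) z = 0"
proof -
  have k: "k \<in> {1..p}" "k \<noteq> l"
    using S S_eq by auto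
  have compl_dF_above: "compl_dF m t = 0" if "m \<in> {k<..p}" for m t
  proof (rule F_incr_triangular_zero[of "k + 1"])
    fix m assume "m \<in> {k + 1..p}"
    then show "(\<Sum>i\<in>{1..p}. F_incr m 1 i * compl_dF i t) = 0"
      using \<open>l < k\<close> S_eq by (intro sum_F_incr_compl_dF_zero) auto
  qed (use that in auto)
  have linear: "u (t + us k y) - u (t + us k 0) = y * (compl_dF k t / sd k)" for t y
  proof -
    have "(\<Sum>i\<in>{1..p}. F_incr k y i * compl_dF i t) = F_incr k y k * compl_dF k t"
      using k(1) compl_dF_above by (intro sum_triangular F_incr_below_diag) auto
    then show ?thesis
      using u_increment[OF k(2), of "(\<lambda>_. 0)(l := t)" y] u_arg_base S_eq k(2)
      by (simp add: fun_upd_idem F_incr_diag)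
  qed
  have "k \<in> S"
    using S_eq by simp
  then obtain y0 where "deriv (us k) y0 \<noteq> 0"
    using us_nonconst by blast
  then show ?thesis
    by (rule deriv2_zero_if_increment_linear[OF u us_C2[OF \<open>k \<in> S\<close>] _ linear])
qed

lemma deriv2_u_zero_if_S_above:
  assumes "k \<in> S" "l < k"
  shows "deriv (deriv u) z = 0"
proof (cases "S = {k}")
  case False
  with \<open>k \<in> S\<close> obtain s' where "s' \<in> S" "s' \<noteq> k"
    by blast
  then show ?thesis
    by (intro deriv2_u_zero_if_two_in_S[OF \<open>k \<in> S\<close> \<open>s' \<in> S\<close>]) simp
qed (rule deriv2_u_zero_if_S_singleton[OF _ \<open>l < k\<close>])

lemma compl_d2F_above_zero:
  assumes "m \<in> {l<..p}"
  shows "compl_d2F m t = 0"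
proof (rule F_incr_triangular_zero[of "l + 1"])
  fix k assume "k \<in> {l + 1..p}"
  then have "k \<noteq> l" "k \<notin> S \<or> (\<forall>z. deriv (deriv u) z = 0)"
    using deriv2_u_zero_if_S_above by auto
  then show "(\<Sum>i\<in>{1..p}. F_incr k 1 i * compl_d2F i t) = 0"
    by (rule sum_F_incr_compl_d2F_zero)
qed (use assms in auto)

lemma compl_d2F_zero:
  assumes "i \<in> {1..p}"
  shows "compl_d2F i t = 0"
  unfolding compl_d2F_def
proof (rule id_minus_mult_zero_if_disjoint_support[OF A _ assms])
  fix j assume "j \<in> {1..p}"
  then show "id_minus_mult p A (\<lambda>j. d2F l j t) j * d2F l j t = 0"
    using l compl_d2F_above_zero[of j t] d2F_upto_diag[of j l t]
    unfolding compl_d2F_def by (cases "j \<le> l") auto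
qed

end

theorem mainTheorem13:
  fixes p l :: nat and D :: "nat rel" and mu sd :: "nat \<Rightarrow> real"
    and f :: "nat \<Rightarrow> nat \<Rightarrow> real \<Rightarrow> real"
    and A :: "nat \<Rightarrow> nat \<Rightarrow> real" and S :: "nat set"
    and u :: "real \<Rightarrow> real" and us :: "nat \<Rightarrow> real \<Rightarrow> real"
  defines "F \<equiv> PLSEM_fun D mu f sd"
  assumes plsem: "is_PLSEM p D mu f sd"
    and lower: "jacobian_lower_triangular p F"
    and l: "l \<in> {1..p}"
    and A: "orth_projection p A"
    and S: "S \<subseteq> {1..p} - {l}"
    and u: "C2 u"
    and us: "\<forall>s\<in>S. C2 (us s) \<and> (\<exists>t. deriv (us s) t \<noteq> 0)"
    and eq: "\<forall>x. u (x l + (\<Sum>s\<in>S. us s (x s))) =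
               (\<Sum>i\<in>{1..p}. F x i *
                  id_minus_mult p A (\<lambda>j. partial l (\<lambda>y. F y j) x) i)"
  shows "\<forall>x. \<forall>i\<in>{1..p}.
           id_minus_mult p A (\<lambda>j. partial l (\<lambda>y. partial l (\<lambda>z. F z j) y) x) i = 0"
proof -
  interpret P: PLSEM_identity p D mu sd f l A S u us
    using plsem lower l A S u us eq unfolding F_def is_PLSEM_def by unfold_locales auto
  show ?thesis
    using P.compl_d2F_zero unfolding F_def P.partial2_F P.compl_d2F_def by simp
qed

end
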